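(* Let $n,k,\ell,\ell',t$ be integers with $n\ge 2$ and $k\ge \ell\ge \ell'\ge t\ge 1$. Let $[m]=X_1\cup\dots\cup X_k$ with the $X_i$ pairwise disjoint, $|X_i|=n$, and let $v_i$ be the smallest element of $X_i$. Define $\mathcal{F}_0=\{F\in\mathcal{H}(n,k,\ell): |F\cap\{v_1,\dots,v_{\ell'}\}|\ge t\}$ and $\mathcal{G}_0=\{\{v_1,\dots,v_{\ell'}\}\}$, and for every integer $a\ge 1$ define $\mathcal{F}_a=\{F\in\mathcal{H}(n,k,\ell): \{v_1,\dots,v_a\}\subseteq F\}$ and $\mathcal{G}_a=\{G\in\mathcal{H}(n,k,\ell'): |G\cap\{v_1,\dots,v_a\}|\ge t\}$. If $\mathcal{F}\subseteq\mathcal{H}(n,k,\ell)$ and $\mathcal{G}\subseteq\mathcal{H}(n,k,\ell')$ are both non-empty and cross $t$-intersecting, then $$|\mathcal{F}|+|\mathcal{G}|\le \max\Big\{|\mathcal{F}_0|+|\mathcal{G}_0|,\ \max_{a\in[\ell'+1,\ell]}\{|\mathcal{F}_a|+|\mathcal{G}_a|\}\Big\},$$ where the inner maximum is omitted if $\ell=\ell'$.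
   Context: For integers $p\le q$, $[p,q]=\{p,p+1,\dots,q\}$ and $[q]=[1,q]$. Here $m=kn$ and the elements of $[m]$ carry their natural order. For $\ell\in[k]$, $\mathcal{H}(n,k,\ell)=\{H\subseteq[m]: |H|=\ell,\ |H\cap X_i|\le 1 \text{ for all } i\in[k]\}$. Two families $\mathcal{F},\mathcal{G}$ are cross $t$-intersecting if $|F\cap G|\ge t$ for all $F\in\mathcal{F}$, $G\in\mathcal{G}$. *)

theory Defs
  imports Main
begin

definition Hfam :: "(nat \<Rightarrow> nat set) \<Rightarrow> nat \<Rightarrow> nat \<Rightarrow> nat \<Rightarrow> nat set set" where
  "Hfam X n k l = {H. H \<subseteq> {1..k*n} \<and> card H = l \<and> (\<forall>i\<in>{1..k}. card (H \<inter> X i) \<le> 1)}"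

definition cross_t_intersecting :: "nat \<Rightarrow> 'a set set \<Rightarrow> 'a set set \<Rightarrow> bool" where
  "cross_t_intersecting t \<F> \<G> \<longleftrightarrow> (\<forall>F\<in>\<F>. \<forall>G\<in>\<G>. t \<le> card (F \<inter> G))"

definition Vset :: "(nat \<Rightarrow> nat set) \<Rightarrow> nat \<Rightarrow> nat set" where
  "Vset X a = (\<lambda>i. Min (X i)) ` {1..a}"

end

(* Among all pairs (A, B) of non-empty cross t-intersecting families with A in H(p) and B in
   H(q) take one maximising |A| + |B| and, among those, minimising the smaller family, say A.
   For an involution \<sigma> of [m] permuting the parts and fixing a member of A, the pairs
   (A \<inter> \<sigma>A, B \<union> \<sigma>B) and (A \<union> \<sigma>A, B \<inter> \<sigma>B) show that \<sigma>A = A. Such a stabiliser-closed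
   family is a single set F when n \<ge> 3. When n = 2, either A is contained in {F, F'} with F'
   disjoint from F, or t = 1 and A - {F} injects into the sets G \<in> H(q) outside B with
   |G \<inter> F| \<ge> t. Either way |A| + |B| \<le> 1 + |{G \<in> H(q). |G \<inter> F| \<ge> t}|, and since the
   involutions act transitively on H(p) we may take F = {v_1, ..., v_p}; p = l' and p = l give
   the terms indexed by 0 and by l. *)

theory Submission
  imports Defs "HOL-Combinatorics.Transposition"
begin

lemma card_Int_less_if_point_removed:
  assumes "finite E" "d \<in> E" "d \<in> G" "R \<subseteq> E - {d}" "Y \<inter> G = {}"
  shows "card ((R \<union> Y) \<inter> G) < card (E \<inter> G)"
proof -
  have "(R \<union> Y) \<inter> G \<subseteq> E \<inter> G - {d}" using assms by blast
  then have "card ((R \<union> Y) \<inter> G) \<le> card (E \<inter> G - {d})" using assms(1) by (intro card_mono) auto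
  also have "\<dots> < card (E \<inter> G)" using assms by (intro card_Diff1_less) auto
  finally show ?thesis .
qed

lemma ex_bij_betw_mapping_point:
  assumes "finite A" "finite B" "card A = card B" "a \<in> A" "b \<in> B"
  shows "\<exists>f. bij_betw f A B \<and> f a = b"
proof -
  have "card (A - {a}) = card (B - {b})"
    using card_Diff_singleton[OF assms(4)] card_Diff_singleton[OF assms(5)] assms(3) by presburger
  then obtain f where f: "bij_betw f (A - {a}) (B - {b})"
    using finite_same_card_bij[OF finite_Diff[OF assms(1)] finite_Diff[OF assms(2)]] by blast
  have "bij_betw (f(a := b)) (A - {a}) (B - {b})"
    using f by (rule bij_betw_cong[THEN iffD1, rotated]) simp
  then have "bij_betw (f(a := b)) ((A - {a}) \<union> {a}) ((B - {b}) \<union> {(f(a := b)) a})"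
    by (intro notIn_Un_bij_betw) auto
  moreover have "(A - {a}) \<union> {a} = A" "(B - {b}) \<union> {(f(a := b)) a} = B" using assms(4,5) by auto
  ultimately show ?thesis by (intro exI[of _ "f(a := b)"]) simp
qed

lemma ex_involution_exchanging:
  assumes disj: "A \<inter> B = {}" and f: "bij_betw f A B"
  shows "\<exists>\<sigma>. (\<forall>z. \<sigma> (\<sigma> z) = z) \<and> \<sigma> ` A = B \<and> \<sigma> ` B = A \<and> (\<forall>z\<in>A. \<sigma> z = f z)
           \<and> (\<forall>z. z \<notin> A \<union> B \<longrightarrow> \<sigma> z = z)"
proof -
  define g where "g = inv_into A f"
  have g: "bij_betw g B A" unfolding g_def using f by (rule bij_betw_inv_into)
  define \<sigma> where "\<sigma> z = (if z \<in> A then f z else if z \<in> B then g z else z)" for z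
  have invol: "\<sigma> (\<sigma> z) = z" for z
  proof (cases "z \<in> A")
    case True
    then have "f z \<in> B" "f z \<notin> A" using f disj by (auto dest: bij_betwE)
    then show ?thesis using True f by (simp add: \<sigma>_def g_def bij_betw_inv_into_left)
  next
    case False
    show ?thesis
    proof (cases "z \<in> B")
      case True
      then have "g z \<in> A" using g by (auto dest: bij_betwE)
      then show ?thesis using True False f by (simp add: \<sigma>_def g_def bij_betw_inv_into_right)
    qed (simp add: \<sigma>_def False)
  qed
  have "\<sigma> ` A = f ` A" by (simp add: \<sigma>_def)
  moreover have "\<sigma> ` B = g ` B" using disj by (auto simp: \<sigma>_def)
  ultimately have "\<sigma> ` A = B" "\<sigma> ` B = A" using f g by (simp_all add: bij_betw_def)
  with invol show ?thesis by (intro exI[of _ \<sigma>]) (auto simp: \<sigma>_def)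
qed

lemma card_add_le_if_inj_into_complement:
  assumes "finite P" "B \<subseteq> P" "finite A" "F \<in> A"
    and "inj_on \<phi> (A - {F})" "\<phi> ` (A - {F}) \<subseteq> P - B"
  shows "card A + card B \<le> 1 + card P"
proof -
  have "card (A - {F}) \<le> card (P - B)"
    using card_inj_on_le[OF assms(5,6)] assms(1) by simp
  moreover have "card (P - B) = card P - card B" "card B \<le> card P"
    using assms(1,2) by (auto simp: card_Diff_subset finite_subset card_mono)
  moreover have "card (A - {F}) = card A - 1" using assms(4) by simp
  moreover have "card A \<noteq> 0" using assms(3,4) by auto
  ultimately show ?thesis by linarith
qed

lemma notin_if_Int_eq_singleton: "F \<inter> Y = {x} \<Longrightarrow> y \<in> Y \<Longrightarrow> y \<noteq> x \<Longrightarrow> y \<notin> F"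
  by auto

locale equipartition =
  fixes X :: "nat \<Rightarrow> nat set" and n k :: nat
  assumes two_le_n: "n \<ge> 2"
    and Union_parts: "(\<Union>i\<in>{1..k}. X i) = {1..k*n}"
    and parts_disjoint: "\<forall>i\<in>{1..k}. \<forall>j\<in>{1..k}. i \<noteq> j \<longrightarrow> X i \<inter> X j = {}"
    and card_parts: "\<forall>i\<in>{1..k}. card (X i) = n"
begin

abbreviation H :: "nat \<Rightarrow> nat set set" where
  "H p \<equiv> Hfam X n k p"

lemma card_part: "i \<in> {1..k} \<Longrightarrow> card (X i) = n"
  using card_parts by blast

lemma finite_part: "i \<in> {1..k} \<Longrightarrow> finite (X i)"
  using card_part two_le_n card.infinite by fastforce

lemma part_subset: "i \<in> {1..k} \<Longrightarrow> X i \<subseteq> {1..k*n}"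
  using Union_parts by blast

lemma ex_part: "x \<in> {1..k*n} \<Longrightarrow> \<exists>i\<in>{1..k}. x \<in> X i"
  using Union_parts by blast

lemma disjoint_parts: "i \<in> {1..k} \<Longrightarrow> j \<in> {1..k} \<Longrightarrow> i \<noteq> j \<Longrightarrow> X i \<inter> X j = {}"
  using parts_disjoint by blast

lemma part_unique: "x \<in> X i \<Longrightarrow> x \<in> X j \<Longrightarrow> i \<in> {1..k} \<Longrightarrow> j \<in> {1..k} \<Longrightarrow> i = j"
  using disjoint_parts by blast

lemma ex_other_in_part:
  assumes "i \<in> {1..k}" shows "\<exists>y\<in>X i. y \<noteq> x"
proof (rule ccontr)
  assume "\<not> (\<exists>y\<in>X i. y \<noteq> x)"
  then have "card (X i) \<le> card {x}" by (intro card_mono) auto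
  then show False using card_part[OF assms] two_le_n by simp
qed

lemma part_nonempty: "i \<in> {1..k} \<Longrightarrow> X i \<noteq> {}"
  using ex_other_in_part by blast

lemma Min_part: "i \<in> {1..k} \<Longrightarrow> Min (X i) \<in> X i"
  by (rule Min_in[OF finite_part part_nonempty])

lemma part_of_two_eq:
  assumes "n = 2" "i \<in> {1..k}" "x \<in> X i" "y \<in> X i" "z \<in> X i" "x \<noteq> z" "y \<noteq> z"
  shows "x = y"
proof (rule ccontr)
  assume "x \<noteq> y"
  then have "card {x, y, z} \<le> card (X i)" using assms by (intro card_mono finite_part) auto
  then show False using \<open>x \<noteq> y\<close> assms by (simp add: card_part)
qed

lemma card_eq_sum_parts:
  assumes "Z \<subseteq> {1..k*n}" shows "card Z = (\<Sum>i\<in>{1..k}. card (Z \<inter> X i))"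
proof -
  have "Z = (\<Union>i\<in>{1..k}. Z \<inter> X i)" using assms Union_parts by blast
  moreover have "card (\<Union>i\<in>{1..k}. Z \<inter> X i) = (\<Sum>i\<in>{1..k}. card (Z \<inter> X i))"
    by (rule card_UN_disjoint) (use finite_part parts_disjoint in auto)
  ultimately show ?thesis by simp
qed

lemma eq_if_Int_parts_eq:
  "Z \<subseteq> {1..k*n} \<Longrightarrow> W \<subseteq> {1..k*n} \<Longrightarrow> (\<And>i. i \<in> {1..k} \<Longrightarrow> Z \<inter> X i = W \<inter> X i) \<Longrightarrow> Z = W"
  using ex_part by blast

lemma Int_part_replace_two:
  assumes h: "h \<in> {1..k}" and j: "j \<in> {1..k}" and "h \<noteq> j" and a: "a \<in> X h" and b: "b \<in> X j"
  shows "((E - (X h \<union> X j)) \<union> {a, b}) \<inter> X h = {a}"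
    and "((E - (X h \<union> X j)) \<union> {a, b}) \<inter> X j = {b}"
    and "g \<in> {1..k} \<Longrightarrow> g \<noteq> h \<Longrightarrow> g \<noteq> j \<Longrightarrow> ((E - (X h \<union> X j)) \<union> {a, b}) \<inter> X g = E \<inter> X g"
proof -
  have "X h \<inter> X j = {}" using disjoint_parts assms by blast
  then show "((E - (X h \<union> X j)) \<union> {a, b}) \<inter> X h = {a}" "((E - (X h \<union> X j)) \<union> {a, b}) \<inter> X j = {b}"
    using a b by blast+
  assume g: "g \<in> {1..k}" "g \<noteq> h" "g \<noteq> j"
  then have "X g \<inter> X h = {}" "X g \<inter> X j = {}" using disjoint_parts h j by auto
  then show "((E - (X h \<union> X j)) \<union> {a, b}) \<inter> X g = E \<inter> X g" using a b by blast
qed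

subsection \<open>Transversals\<close>

lemma Hfam_subset: "F \<in> H p \<Longrightarrow> F \<subseteq> {1..k*n}"
  unfolding Hfam_def by blast

lemma finite_Hfam_member: "F \<in> H p \<Longrightarrow> finite F"
  using Hfam_subset finite_subset by blast

lemma card_Hfam_member: "F \<in> H p \<Longrightarrow> card F = p"
  unfolding Hfam_def by blast

lemma card_Hfam_Int_part: "F \<in> H p \<Longrightarrow> i \<in> {1..k} \<Longrightarrow> card (F \<inter> X i) \<le> 1"
  unfolding Hfam_def by blast

lemma finite_Hfam: "finite (H p)"
  by (rule finite_subset[of _ "Pow {1..k*n}"]) (auto simp: Hfam_def)

lemma Hfam_Int_part_singleton:
  assumes "F \<in> H p" "i \<in> {1..k}" "F \<inter> X i \<noteq> {}" shows "\<exists>e. F \<inter> X i = {e}"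
proof -
  obtain x where x: "x \<in> F \<inter> X i" using assms(3) by blast
  have "finite (F \<inter> X i)" "card (F \<inter> X i) \<le> Suc 0"
    using finite_Hfam_member[OF assms(1)] card_Hfam_Int_part[OF assms(1,2)] by auto
  then have "F \<inter> X i = {x}" using x card_le_Suc0_iff_eq by blast
  then show ?thesis by blast
qed

lemma Hfam_Int_part_eq:
  "F \<in> H p \<Longrightarrow> i \<in> {1..k} \<Longrightarrow> x \<in> F \<Longrightarrow> x \<in> X i \<Longrightarrow> F \<inter> X i = {x}"
  by (metis IntI empty_iff Hfam_Int_part_singleton singletonD)

lemma Hfam_eq_if_subset: "F \<in> H p \<Longrightarrow> G \<in> H p \<Longrightarrow> F \<subseteq> G \<Longrightarrow> F = G"
  by (metis card_Hfam_member card_subset_eq finite_Hfam_member)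

definition support :: "nat set \<Rightarrow> nat set" where
  "support Z = {i\<in>{1..k}. Z \<inter> X i \<noteq> {}}"

lemma support_subset: "support F \<subseteq> {1..k}"
  unfolding support_def by blast

lemma card_support:
  assumes F: "F \<in> H p" shows "card (support F) = p"
proof -
  have "p = (\<Sum>i\<in>{1..k}. card (F \<inter> X i))"
    using card_eq_sum_parts[OF Hfam_subset[OF F]] card_Hfam_member[OF F] by simp
  also have "\<dots> = (\<Sum>i\<in>{1..k}. if F \<inter> X i \<noteq> {} then 1 else 0)"
  proof (rule sum.cong)
    fix i assume "i \<in> {1..k}"
    then show "card (F \<inter> X i) = (if F \<inter> X i \<noteq> {} then 1 else 0)"
      using Hfam_Int_part_singleton[OF F] by (cases "F \<inter> X i = {}") fastforce+
  qed simp
  also have "\<dots> = card (support F)"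
    unfolding support_def by (simp add: sum.inter_filter[symmetric])
  finally show ?thesis by simp
qed

lemma Hfam_extend:
  assumes F: "F \<in> H p" and "p \<le> q" "q \<le> k" shows "\<exists>W\<in>H q. F \<subseteq> W"
  using \<open>p \<le> q\<close> \<open>q \<le> k\<close>
proof (induction q rule: dec_induct)
  case base then show ?case using F by blast
next
  case (step q)
  then obtain W where W: "W \<in> H q" "F \<subseteq> W" by auto
  have "card (support W) \<noteq> card {1..k}" using card_support[OF W(1)] step by simp
  then have "support W \<noteq> {1..k}" by auto
  then obtain i where i: "i \<in> {1..k}" "i \<notin> support W" using support_subset by blast
  then have Wi: "W \<inter> X i = {}" unfolding support_def by blast
  obtain x where x: "x \<in> X i" using part_nonempty[OF i(1)] by blast
  have "card (insert x W \<inter> X j) \<le> 1" if j: "j \<in> {1..k}" for j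
  proof (cases "j = i")
    case True
    then show ?thesis using Wi x by (simp add: Int_insert_left)
  next
    case False
    then have "insert x W \<inter> X j = W \<inter> X j" using disjoint_parts[OF i(1) j] x by blast
    then show ?thesis using card_Hfam_Int_part[OF W(1) j] by simp
  qed
  moreover have "x \<notin> W" using Wi x by blast
  then have "card (insert x W) = Suc q"
    using W(1) card_Hfam_member finite_Hfam_member by simp
  moreover have "insert x W \<subseteq> {1..k*n}" using W(1) x Hfam_subset part_subset[OF i(1)] by blast
  ultimately have "insert x W \<in> H (Suc q)" unfolding Hfam_def by blast
  then show ?case using W(2) by blast
qed

lemma Hfam_restrict:
  assumes F: "F \<in> H p" and "q \<le> p" shows "\<exists>W\<in>H q. W \<subseteq> F"
proof -
  obtain W where W: "W \<subseteq> F" "card W = q"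
    using obtain_subset_with_card_n assms card_Hfam_member by metis
  have "card (W \<inter> X i) \<le> 1" if i: "i \<in> {1..k}" for i
  proof -
    have "card (W \<inter> X i) \<le> card (F \<inter> X i)"
      using W finite_Hfam_member[OF F] by (intro card_mono) auto
    then show ?thesis using card_Hfam_Int_part[OF F i] by simp
  qed
  then have "W \<in> H q" using W Hfam_subset[OF F] unfolding Hfam_def by auto
  then show ?thesis using W by blast
qed

lemma complement_in_Hfam:
  assumes n2: "n = 2" and W: "W \<in> H q" and "F \<subseteq> W" and E: "E \<in> H p"
    and supp: "support E = support F"
  shows "(\<Union>(X ` support F) - E) \<union> (W - F) \<in> H q"
proof -
  define C where "C = (\<Union>(X ` support F) - E) \<union> (W - F)"
  have sub: "C \<subseteq> {1..k*n}"
    unfolding C_def using Hfam_subset[OF W] part_subset support_subset by blast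
  have card_Int: "card (C \<inter> X i) = card (W \<inter> X i)" if i: "i \<in> {1..k}" for i
  proof (cases "i \<in> support F")
    case True
    then obtain x where x: "x \<in> F" "x \<in> X i" unfolding support_def by blast
    have Wi: "W \<inter> X i = {x}" using Hfam_Int_part_eq[OF W i] x \<open>F \<subseteq> W\<close> by blast
    obtain e where e: "E \<inter> X i = {e}"
      using Hfam_Int_part_singleton[OF E i] True supp unfolding support_def by blast
    have "W \<inter> X i \<subseteq> F" using Wi x by simp
    then have "(W - F) \<inter> X i = {}" by blast
    then have "C \<inter> X i = X i - {e}" unfolding C_def using True e by blast
    moreover have "e \<in> X i" using e by blast
    ultimately show ?thesis using Wi card_part[OF i] n2 by simp
  next
    case False
    have "X g \<inter> X i = {}" if "g \<in> support F" for g
      using disjoint_parts[OF _ i] that False support_subset by blast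
    moreover have "F \<inter> X i = {}" using False i unfolding support_def by blast
    ultimately have "C \<inter> X i = W \<inter> X i" unfolding C_def by blast
    then show ?thesis by simp
  qed
  then have "card C = q"
    using card_eq_sum_parts[OF sub] card_eq_sum_parts[OF Hfam_subset[OF W]] card_Hfam_member[OF W]
    by simp
  moreover have "card (C \<inter> X i) \<le> 1" if "i \<in> {1..k}" for i
    using card_Int[OF that] card_Hfam_Int_part[OF W that] by simp
  ultimately show ?thesis using sub unfolding Hfam_def C_def by blast
qed

lemma Diff_Int_Union_support:
  assumes W: "W \<in> H q" and "F \<subseteq> W" shows "(W - F) \<inter> \<Union>(X ` support F) = {}"
proof -
  have "W \<inter> X h \<subseteq> F" if h: "h \<in> support F" for h
  proof -
    obtain x where x: "x \<in> F" "x \<in> X h" using h unfolding support_def by blast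
    have "h \<in> {1..k}" using h support_subset by blast
    then have "W \<inter> X h = {x}" using Hfam_Int_part_eq[OF W _ subsetD[OF \<open>F \<subseteq> W\<close> x(1)] x(2)] by blast
    then show ?thesis using x(1) by simp
  qed
  then show ?thesis by blast
qed

lemma Vset_Int_part:
  assumes "p \<le> k" "i \<in> {1..k}"
  shows "Vset X p \<inter> X i = (if i \<le> p then {Min (X i)} else {})"
proof (intro equalityI subsetI)
  fix z assume "z \<in> Vset X p \<inter> X i"
  then obtain j where j: "j \<in> {1..p}" "z = Min (X j)" "z \<in> X i" unfolding Vset_def by blast
  then have "j = i" using part_unique[OF Min_part _ _ assms(2)] assms(1) by auto
  then show "z \<in> (if i \<le> p then {Min (X i)} else {})" using j by auto
next
  fix z assume "z \<in> (if i \<le> p then {Min (X i)} else {})"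
  then show "z \<in> Vset X p \<inter> X i"
    using assms Min_part unfolding Vset_def by (auto split: if_splits)
qed

lemma Vset_in_Hfam:
  assumes pk: "p \<le> k" shows "Vset X p \<in> H p"
proof -
  have "inj_on (\<lambda>i. Min (X i)) {1..p}"
  proof (rule inj_onI)
    fix i j assume "i \<in> {1..p}" "j \<in> {1..p}" "Min (X i) = Min (X j)"
    then show "i = j" using pk part_unique[OF Min_part _ _, of i j] Min_part[of j] by auto
  qed
  then have "card (Vset X p) = p" unfolding Vset_def by (simp add: card_image)
  moreover have "Vset X p \<subseteq> {1..k*n}"
    unfolding Vset_def using pk Min_part part_subset by fastforce
  moreover have "card (Vset X p \<inter> X i) \<le> 1" if "i \<in> {1..k}" for i
    using Vset_Int_part[OF pk that] by simp
  ultimately show ?thesis unfolding Hfam_def by blast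
qed


lemma Hfam_supersets_Vset: "p \<le> k \<Longrightarrow> {F \<in> H p. Vset X p \<subseteq> F} = {Vset X p}"
  using Vset_in_Hfam Hfam_eq_if_subset by blast

subsection \<open>Involutions permuting the parts\<close>

definition part_invol :: "(nat \<Rightarrow> nat) \<Rightarrow> bool" where
  "part_invol \<sigma> \<longleftrightarrow> (\<forall>x. \<sigma> (\<sigma> x) = x) \<and> (\<forall>i\<in>{1..k}. \<exists>j\<in>{1..k}. \<sigma> ` X i = X j)"

lemma part_invol_apply: "part_invol \<sigma> \<Longrightarrow> \<sigma> (\<sigma> x) = x"
  unfolding part_invol_def by blast

lemma part_invol_image_image: "part_invol \<sigma> \<Longrightarrow> \<sigma> ` \<sigma> ` F = F"
  by (simp add: image_image part_invol_apply)

lemma inj_part_invol: "part_invol \<sigma> \<Longrightarrow> inj \<sigma>"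
  by (metis injI part_invol_apply)

lemma inj_on_image_part_invol: "part_invol \<sigma> \<Longrightarrow> inj_on ((`) \<sigma>) S"
  by (metis inj_onI part_invol_image_image)

lemma card_image_part_invol: "part_invol \<sigma> \<Longrightarrow> card (\<sigma> ` F) = card F"
  by (meson card_image inj_on_subset inj_part_invol subset_UNIV)

lemma card_image_Int_part_invol:
  "part_invol \<sigma> \<Longrightarrow> card (\<sigma> ` F \<inter> \<sigma> ` G) = card (F \<inter> G)"
  by (metis card_image_part_invol image_Int inj_part_invol)

lemma image_part_invol_Hfam:
  assumes \<sigma>: "part_invol \<sigma>" and F: "F \<in> H p" shows "\<sigma> ` F \<in> H p"
proof -
  have "\<sigma> ` F \<subseteq> {1..k*n}"
  proof
    fix y assume "y \<in> \<sigma> ` F"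
    then obtain x i where "x \<in> F" "y = \<sigma> x" "i \<in> {1..k}" "x \<in> X i"
      using Hfam_subset[OF F] ex_part by blast
    moreover obtain j where "j \<in> {1..k}" "\<sigma> ` X i = X j" using \<sigma> \<open>i \<in> {1..k}\<close>
      unfolding part_invol_def by blast
    ultimately show "y \<in> {1..k*n}" using part_subset by blast
  qed
  moreover have "card (\<sigma> ` F \<inter> X j) \<le> 1" if j: "j \<in> {1..k}" for j
  proof -
    obtain i where i: "i \<in> {1..k}" "\<sigma> ` X j = X i" using \<sigma> j unfolding part_invol_def by blast
    then have "X j = \<sigma> ` X i" using part_invol_image_image[OF \<sigma>, of "X j"] by simp
    then have "card (\<sigma> ` F \<inter> X j) = card (F \<inter> X i)" by (simp add: card_image_Int_part_invol[OF \<sigma>])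
    then show ?thesis using card_Hfam_Int_part[OF F i(1)] by simp
  qed
  ultimately show ?thesis
    using card_image_part_invol[OF \<sigma>] card_Hfam_member[OF F] unfolding Hfam_def by blast
qed

lemma part_invol_transpose:
  assumes i: "i \<in> {1..k}" and "x \<in> X i" "y \<in> X i" shows "part_invol (transpose x y)"
  unfolding part_invol_def
proof (intro conjI allI ballI)
  fix j assume j: "j \<in> {1..k}"
  have "x \<in> X j \<longleftrightarrow> y \<in> X j" using assms j part_unique by blast
  then show "\<exists>j'\<in>{1..k}. transpose x y ` X j = X j'" using j by auto
qed simp

lemma ex_part_invol_exchanging:
  assumes h: "h \<in> {1..k}" and i: "i \<in> {1..k}" and "h \<noteq> i" and "d \<in> X h" "w \<in> X i"
  shows "\<exists>\<sigma>. part_invol \<sigma> \<and> \<sigma> d = w \<and> \<sigma> ` X h = X i \<and> \<sigma> ` X i = X h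
           \<and> (\<forall>z. z \<notin> X h \<union> X i \<longrightarrow> \<sigma> z = z)"
proof -
  have "card (X h) = card (X i)" using card_part h i by simp
  then obtain f where f: "bij_betw f (X h) (X i)" "f d = w"
    using ex_bij_betw_mapping_point[OF finite_part[OF h] finite_part[OF i]] assms(4,5) by blast
  have "X h \<inter> X i = {}" using disjoint_parts[OF h i \<open>h \<noteq> i\<close>] .
  from ex_involution_exchanging[OF this f(1)]
  obtain \<sigma> where \<sigma>: "\<forall>z. \<sigma> (\<sigma> z) = z" "\<sigma> ` X h = X i" "\<sigma> ` X i = X h"
      "\<forall>z\<in>X h. \<sigma> z = f z" "\<forall>z. z \<notin> X h \<union> X i \<longrightarrow> \<sigma> z = z"
    by blast
  have "\<exists>j'\<in>{1..k}. \<sigma> ` X j = X j'" if j: "j \<in> {1..k}" for j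
  proof (cases "j = h \<or> j = i")
    case True
    then show ?thesis using \<sigma>(2,3) h i by blast
  next
    case False
    then have "\<forall>z\<in>X j. \<sigma> z = z" using \<sigma>(5) disjoint_parts[OF j h] disjoint_parts[OF j i] by blast
    then have "\<sigma> ` X j = X j" by force
    then show ?thesis using j by blast
  qed
  moreover have "\<sigma> d = w" using \<sigma>(4) f(2) assms(4) by simp
  ultimately show ?thesis using \<sigma> unfolding part_invol_def by blast
qed

definition partners :: "nat \<Rightarrow> nat \<Rightarrow> nat set \<Rightarrow> nat set set" where
  "partners t q F = {G \<in> H q. t \<le> card (G \<inter> F)}"

lemma finite_partners: "finite (partners t q F)"
  unfolding partners_def using finite_Hfam by simp

lemma image_partners_subset:
  assumes \<sigma>: "part_invol \<sigma>" shows "(`) \<sigma> ` partners t q F \<subseteq> partners t q (\<sigma> ` F)"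
proof
  fix G' assume "G' \<in> (`) \<sigma> ` partners t q F"
  then obtain G where "G \<in> H q" "t \<le> card (G \<inter> F)" "G' = \<sigma> ` G"
    unfolding partners_def by blast
  then show "G' \<in> partners t q (\<sigma> ` F)"
    unfolding partners_def
    using image_part_invol_Hfam[OF \<sigma>] card_image_Int_part_invol[OF \<sigma>] by simp
qed

lemma card_partners_image:
  assumes \<sigma>: "part_invol \<sigma>" shows "card (partners t q (\<sigma> ` F)) = card (partners t q F)"
proof -
  have "(`) \<sigma> ` partners t q (\<sigma> ` F) \<subseteq> partners t q (\<sigma> ` \<sigma> ` F)"
    by (rule image_partners_subset[OF \<sigma>])
  then have "(`) \<sigma> ` (`) \<sigma> ` partners t q (\<sigma> ` F) \<subseteq> (`) \<sigma> ` partners t q F"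
    unfolding part_invol_image_image[OF \<sigma>] by (rule image_mono)
  then have "partners t q (\<sigma> ` F) \<subseteq> (`) \<sigma> ` partners t q F"
    by (simp only: image_image part_invol_apply[OF \<sigma>] image_ident)
  then have "partners t q (\<sigma> ` F) = (`) \<sigma> ` partners t q F"
    using image_partners_subset[OF \<sigma>] by (rule subset_antisym)
  then show ?thesis using card_image[OF inj_on_image_part_invol[OF \<sigma>]] by metis
qed

lemma ex_part_invol_towards_Vset:
  assumes F: "F \<in> H p" and pk: "p \<le> k" and x: "x \<in> F" "x \<notin> Vset X p"
  shows "\<exists>\<sigma> v. part_invol \<sigma> \<and> v \<in> Vset X p \<and> v \<notin> F \<and> \<sigma> ` F = insert v (F - {x})"
proof -
  obtain h where h: "h \<in> {1..k}" "x \<in> X h" using ex_part Hfam_subset[OF F] x(1) by blast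
  have Fh: "F \<inter> X h = {x}" using Hfam_Int_part_eq[OF F h(1) x(1) h(2)] .
  show ?thesis
  proof (cases "h \<le> p")
    case True
    define v where "v = Min (X h)"
    have v: "v \<in> X h" "v \<in> Vset X p" unfolding v_def Vset_def using True h Min_part by auto
    then have "v \<notin> F" using Fh x(2) by auto
    then have "transpose x v ` F = insert v (F - {x})"
      using x(1) by (auto simp: transpose_def)
    then show ?thesis using part_invol_transpose[OF h v(1)] v \<open>v \<notin> F\<close> by blast
  next
    case False
    have "\<exists>i\<in>{1..p}. F \<inter> X i = {}"
    proof (rule ccontr)
      assume "\<not> (\<exists>i\<in>{1..p}. F \<inter> X i = {})"
      then have "insert h {1..p} \<subseteq> support F" unfolding support_def using pk h Fh by auto
      then have "card (insert h {1..p}) \<le> card (support F)"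
        by (intro card_mono) (auto intro: finite_subset[OF support_subset])
      then show False using card_support[OF F] False by simp
    qed
    then obtain i where i: "i \<in> {1..p}" "F \<inter> X i = {}" by blast
    then have ik: "i \<in> {1..k}" and "h \<noteq> i" using pk False by auto
    define v where "v = Min (X i)"
    have v: "v \<in> X i" "v \<in> Vset X p" "v \<notin> F" unfolding v_def Vset_def using i ik Min_part by auto
    obtain \<tau> where \<tau>: "part_invol \<tau>" "\<tau> x = v" "\<forall>z. z \<notin> X h \<union> X i \<longrightarrow> \<tau> z = z"
      using ex_part_invol_exchanging[OF h(1) ik \<open>h \<noteq> i\<close> h(2) v(1)] by blast
    have "\<forall>z\<in>F - {x}. \<tau> z = z" using \<tau>(3) Fh i(2) by blast
    then have "\<tau> ` (F - {x}) = F - {x}" by force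
    then have "\<tau> ` F = insert v (F - {x})" using \<tau>(2) x(1) by (metis image_insert insert_Diff)
    then show ?thesis using \<tau>(1) v by blast
  qed
qed

lemma card_partners_eq_Vset:
  assumes "F \<in> H p" "p \<le> k"
  shows "card (partners t q F) = card (partners t q (Vset X p))"
  using assms
proof (induction "card (F - Vset X p)" arbitrary: F)
  case 0
  then have "F \<subseteq> Vset X p" using finite_Hfam_member by auto
  then show ?case using Hfam_eq_if_subset[OF 0(2) Vset_in_Hfam[OF 0(3)]] by simp
next
  case (Suc m)
  then have "F - Vset X p \<noteq> {}" by force
  then obtain x where x: "x \<in> F" "x \<notin> Vset X p" by blast
  obtain \<sigma> v where \<sigma>: "part_invol \<sigma>" "v \<in> Vset X p" "\<sigma> ` F = insert v (F - {x})"
    using ex_part_invol_towards_Vset[OF Suc.prems x] by blast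
  have "\<sigma> ` F - Vset X p = (F - Vset X p) - {x}" using \<sigma>(2,3) by auto
  then have "m = card (\<sigma> ` F - Vset X p)"
    using Suc.hyps(2) x finite_Hfam_member[OF Suc.prems(1)] by simp
  then have "card (partners t q (\<sigma> ` F)) = card (partners t q (Vset X p))"
    using Suc.hyps(1) image_part_invol_Hfam[OF \<sigma>(1) Suc.prems(1)] Suc.prems(2) by blast
  then show ?case using card_partners_image[OF \<sigma>(1)] by simp
qed


subsection \<open>Extremal pairs\<close>

definition admissible :: "nat \<Rightarrow> nat \<Rightarrow> nat \<Rightarrow> nat set set \<Rightarrow> nat set set \<Rightarrow> bool" where
  "admissible p q t A B \<longleftrightarrow>
     A \<subseteq> H p \<and> B \<subseteq> H q \<and> A \<noteq> {} \<and> B \<noteq> {} \<and> cross_t_intersecting t A B"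

lemma admissible_swap: "admissible p q t A B \<Longrightarrow> admissible q p t B A"
  unfolding admissible_def cross_t_intersecting_def by (metis Int_commute)

lemma finite_admissible:
  "admissible p q t A B \<Longrightarrow> finite A \<and> finite B"
  unfolding admissible_def using finite_Hfam finite_subset by blast

definition stabiliser_closed :: "nat set set \<Rightarrow> bool" where
  "stabiliser_closed A \<longleftrightarrow>
     (\<forall>\<sigma> K E. part_invol \<sigma> \<longrightarrow> K \<in> A \<longrightarrow> \<sigma> ` K = K \<longrightarrow> E \<in> A \<longrightarrow> \<sigma> ` E \<in> A)"

text \<open>For \<sigma> fixing a member of A, the pair (A \<inter> \<sigma>A, B \<union> \<sigma>B) is admissible, and so is
  (A \<union> \<sigma>A, B \<inter> \<sigma>B) unless B \<inter> \<sigma>B = {}. Their sizes add up to twice |A| + |B|, so maximality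
  and then minimality of |A| force \<sigma>A = A.\<close>

lemma stabiliser_closed_if_extremal:
  assumes adm: "admissible p q t A B"
    and max: "\<And>A' B'. admissible p q t A' B' \<Longrightarrow> card A' + card B' \<le> card A + card B"
    and min: "\<And>A' B'. admissible p q t A' B' \<Longrightarrow> card A' + card B' = card A + card B
                \<Longrightarrow> card A \<le> card A' \<and> card A \<le> card B'"
  shows "stabiliser_closed A"
  unfolding stabiliser_closed_def
proof (intro allI impI)
  fix \<sigma> K E assume \<sigma>: "part_invol \<sigma>" and K: "K \<in> A" "\<sigma> ` K = K" and E: "E \<in> A"
  define A' where "A' = (`) \<sigma> ` A"
  define B' where "B' = (`) \<sigma> ` B"
  have fin: "finite A" "finite B" "finite A'" "finite B'"
    using finite_admissible[OF adm] unfolding A'_def B'_def by auto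
  have cA': "card A' = card A" and cB': "card B' = card B"
    unfolding A'_def B'_def by (simp_all add: card_image inj_on_image_part_invol[OF \<sigma>])
  have adm': "admissible p q t A' B'"
    using adm unfolding admissible_def cross_t_intersecting_def A'_def B'_def
    by (auto simp: image_part_invol_Hfam[OF \<sigma>] card_image_Int_part_invol[OF \<sigma>])
  have KA': "K \<in> A'" unfolding A'_def using K by (metis image_eqI)
  have adm1: "admissible p q t (A \<inter> A') (B \<union> B')"
    using adm adm' K KA' unfolding admissible_def cross_t_intersecting_def by blast
  have c1: "card (A \<inter> A') + card (A \<union> A') = card A + card A'"
    and c2: "card (B \<inter> B') + card (B \<union> B') = card B + card B'"
    using card_Un_Int fin by (metis add.commute)+
  have max1: "card (A \<inter> A') + card (B \<union> B') \<le> card A + card B" using max[OF adm1] .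
  have AleB: "card A \<le> card B" using min[OF adm] by simp
  have "A \<subseteq> A'"
  proof (cases "B \<inter> B' = {}")
    case True
    then have "card (B \<union> B') = card B + card B'" using fin by (simp add: card_Un_disjoint)
    then have "card (A \<inter> A') = 0" using cB' max1 AleB by linarith
    then have "A \<inter> A' = {}" using fin by simp
    then show ?thesis using K KA' by blast
  next
    case False
    then have "admissible p q t (A \<union> A') (B \<inter> B')"
      using adm adm' unfolding admissible_def cross_t_intersecting_def by blast
    then have "card (A \<inter> A') + card (B \<union> B') = card A + card B"
      using max max1 c1 c2 cA' cB' by fastforce
    then have "card A \<le> card (A \<inter> A')" using min[OF adm1] by simp
    then show ?thesis using fin by (metis Int_lower1 Int_lower2 card_seteq)
  qed
  then have "A' = A" using card_seteq[OF fin(3) _ ] cA' by (metis order_refl)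
  then show "\<sigma> ` E \<in> A" using E unfolding A'_def by blast
qed

lemma ex_admissible_max_then_min:
  assumes "admissible p q t A B"
  obtains A1 B1 where "admissible p q t A1 B1"
    "\<And>A' B'. admissible p q t A' B' \<Longrightarrow> card A' + card B' \<le> card A1 + card B1"
    "\<And>A' B'. admissible p q t A' B' \<Longrightarrow> card A' + card B' = card A1 + card B1
       \<Longrightarrow> min (card A1) (card B1) \<le> min (card A') (card B')"
proof -
  define P where "P = (\<lambda>AB. admissible p q t (fst AB) (snd AB))"
  define size where "size = (\<lambda>AB::nat set set \<times> nat set set. card (fst AB) + card (snd AB))"
  have bound: "\<forall>AB. P AB \<longrightarrow> size AB < card (H p) + card (H q) + 1"
  proof (intro allI impI)
    fix AB assume "P AB"
    then have "card (fst AB) \<le> card (H p)" "card (snd AB) \<le> card (H q)"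
      using finite_Hfam unfolding P_def admissible_def by (auto intro: card_mono)
    then show "size AB < card (H p) + card (H q) + 1" unfolding size_def by simp
  qed
  have "P (A, B)" unfolding P_def using assms by simp
  then obtain AB0 where AB0: "P AB0" and max0: "\<And>AB. P AB \<Longrightarrow> size AB \<le> size AB0"
    using ex_has_greatest_nat[of P "(A, B)" size, OF _ bound] by blast
  define P' where "P' = (\<lambda>AB. P AB \<and> size AB = size AB0)"
  obtain AB1 where AB1: "P' AB1"
    and min1: "\<And>AB. P' AB \<Longrightarrow> min (card (fst AB1)) (card (snd AB1)) \<le> min (card (fst AB)) (card (snd AB))"
    using ex_has_least_nat[of P' AB0 "\<lambda>AB. min (card (fst AB)) (card (snd AB))"] AB0
    unfolding P'_def by blast
  obtain A1 B1 where AB1_eq: "AB1 = (A1, B1)" by fastforce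
  show ?thesis
  proof
    show "admissible p q t A1 B1" using AB1 AB1_eq unfolding P'_def P_def by simp
    show "card A' + card B' \<le> card A1 + card B1" if "admissible p q t A' B'" for A' B'
      using max0[of "(A', B')"] that AB1 AB1_eq unfolding P'_def P_def size_def by simp
    show "min (card A1) (card B1) \<le> min (card A') (card B')"
      if "admissible p q t A' B'" "card A' + card B' = card A1 + card B1" for A' B'
      using min1[of "(A', B')"] that AB1 AB1_eq unfolding P'_def P_def size_def by simp
  qed
qed

lemma ex_extremal_admissible:
  assumes "admissible p q t A B"
  obtains A1 B1 where "admissible p q t A1 B1"
    "\<And>A' B'. admissible p q t A' B' \<Longrightarrow> card A' + card B' \<le> card A1 + card B1"
    "stabiliser_closed A1 \<or> stabiliser_closed B1"
proof -
  obtain A1 B1 where adm1: "admissible p q t A1 B1"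
    and max1: "\<And>A' B'. admissible p q t A' B' \<Longrightarrow> card A' + card B' \<le> card A1 + card B1"
    and min1: "\<And>A' B'. admissible p q t A' B' \<Longrightarrow> card A' + card B' = card A1 + card B1
       \<Longrightarrow> min (card A1) (card B1) \<le> min (card A') (card B')"
    using ex_admissible_max_then_min[OF assms] by blast
  have "stabiliser_closed A1 \<or> stabiliser_closed B1"
  proof (cases "card A1 \<le> card B1")
    case True
    have "card A1 \<le> card A' \<and> card A1 \<le> card B'"
      if "admissible p q t A' B'" "card A' + card B' = card A1 + card B1" for A' B'
      using min1[OF that] True by simp
    then have "stabiliser_closed A1" by (intro stabiliser_closed_if_extremal[OF adm1 max1])
    then show ?thesis ..
  next
    case False
    have "card B' + card A' \<le> card B1 + card A1" if "admissible q p t B' A'" for A' B'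
      using max1[OF admissible_swap[OF that]] by simp
    moreover have "card B1 \<le> card B' \<and> card B1 \<le> card A'"
      if "admissible q p t B' A'" "card B' + card A' = card B1 + card A1" for A' B'
      using min1[OF admissible_swap[OF that(1)]] that(2) False by simp
    ultimately have "stabiliser_closed B1"
      by (intro stabiliser_closed_if_extremal[OF admissible_swap[OF adm1]])
    then show ?thesis ..
  qed
  then show ?thesis using that adm1 max1 by blast
qed

end


subsection \<open>Stabiliser-closed families\<close>

locale closed_pair = equipartition +
  fixes p q t :: nat and A B :: "nat set set"
  assumes A_Hfam: "A \<subseteq> H p" and B_Hfam: "B \<subseteq> H q" and B_nonempty: "B \<noteq> {}"
    and cross: "cross_t_intersecting t A B" and closed: "stabiliser_closed A"
    and t_pos: "1 \<le> t"
begin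

lemma member_Hfam: "E \<in> A \<Longrightarrow> E \<in> H p"
  using A_Hfam by blast

lemma closedD: "part_invol \<sigma> \<Longrightarrow> K \<in> A \<Longrightarrow> \<sigma> ` K = K \<Longrightarrow> E \<in> A \<Longrightarrow> \<sigma> ` E \<in> A"
  using closed unfolding stabiliser_closed_def by blast

lemma cross_le: "F \<in> A \<Longrightarrow> G \<in> B \<Longrightarrow> t \<le> card (F \<inter> G)"
  using cross unfolding cross_t_intersecting_def by blast

text \<open>A move inside part i is conjugated by an involution exchanging parts h and i that
  fixes E.\<close>

lemma move_transfer:
  assumes moves: "\<And>E u u'. E \<in> A \<Longrightarrow> E \<inter> X i = {u} \<Longrightarrow> u' \<in> X i \<Longrightarrow> (E - {u}) \<union> {u'} \<in> A"
    and i: "i \<in> {1..k}" and E: "E \<in> A" and w: "E \<inter> X i = {w}"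
    and h: "h \<in> {1..k}" "h \<noteq> i" and d: "d \<in> E" "d \<in> X h" and e: "e \<in> X h"
  shows "(E - {d}) \<union> {e} \<in> A"
proof -
  have w_part: "w \<in> X i" using w by blast
  obtain \<sigma> where \<sigma>: "part_invol \<sigma>" "\<sigma> d = w" "\<sigma> ` X h = X i"
      "\<forall>z. z \<notin> X h \<union> X i \<longrightarrow> \<sigma> z = z"
    using ex_part_invol_exchanging[OF h(1) i h(2) d(2) w_part] by blast
  have \<sigma>w: "\<sigma> w = d" using \<sigma>(2) part_invol_apply[OF \<sigma>(1), of d] by simp
  define R where "R = E - (X h \<union> X i)"
  have \<sigma>R: "\<sigma> ` R = R" using \<sigma>(4) unfolding R_def by force
  have "E \<inter> X h = {d}" using Hfam_Int_part_eq[OF member_Hfam[OF E] h(1) d] .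
  then have ER: "E = insert d (insert w R)" unfolding R_def using w by blast
  have "d \<noteq> w" "w \<notin> R" "d \<notin> R" using disjoint_parts[OF h(1) i h(2)] d(2) w_part
    unfolding R_def by blast+
  then have Ew: "E - {w} = insert d R" and Ed: "E - {d} = insert w R" using ER by blast+
  have \<sigma>E: "\<sigma> ` E = E" using ER \<sigma>R \<sigma>(2) \<sigma>w by (simp add: insert_commute)
  have "\<sigma> e \<in> X i" using \<sigma>(3) e by blast
  then have "(E - {w}) \<union> {\<sigma> e} \<in> A" using moves[OF E w] by blast
  then have "\<sigma> ` ((E - {w}) \<union> {\<sigma> e}) \<in> A" using closedD[OF \<sigma>(1) E \<sigma>E] by blast
  moreover have "\<sigma> ` ((E - {w}) \<union> {\<sigma> e}) = (E - {d}) \<union> {e}"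
    unfolding Ew Ed using \<sigma>R \<sigma>(2) part_invol_apply[OF \<sigma>(1), of e] by simp
  ultimately show ?thesis by simp
qed

text \<open>A member meeting part i with fewest points in some G \<in> B could otherwise trade one of
  its points in G for a point outside G and still meet part i.\<close>

lemma part_missed_if_moves:
  assumes moves: "\<And>E u u'. E \<in> A \<Longrightarrow> E \<inter> X i = {u} \<Longrightarrow> u' \<in> X i \<Longrightarrow> (E - {u}) \<union> {u'} \<in> A"
    and i: "i \<in> {1..k}" and E0: "E0 \<in> A"
  shows "E0 \<inter> X i = {}"
proof (rule ccontr)
  assume E0i: "E0 \<inter> X i \<noteq> {}"
  obtain G where G: "G \<in> B" using B_nonempty by blast
  have GH: "G \<in> H q" using G B_Hfam by blast
  define P where "P E \<longleftrightarrow> E \<in> A \<and> E \<inter> X i \<noteq> {}" for E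
  obtain E where PE: "P E" and minE: "\<And>E'. P E' \<Longrightarrow> card (E \<inter> G) \<le> card (E' \<inter> G)"
    using ex_has_least_nat[of P E0 "\<lambda>E. card (E \<inter> G)"] E0 E0i unfolding P_def by blast
  then have EA: "E \<in> A" and Ei: "E \<inter> X i \<noteq> {}" unfolding P_def by auto
  have EH: "E \<in> H p" using member_Hfam[OF EA] .
  have "1 \<le> card (E \<inter> G)" using cross_le[OF EA G] t_pos by simp
  then obtain d where dEG: "d \<in> E" "d \<in> G" by (metis Int_iff card.empty ex_in_conv not_one_le_zero)
  obtain h where h: "h \<in> {1..k}" "d \<in> X h" using ex_part Hfam_subset[OF EH] dEG(1) by blast
  obtain e where e: "e \<in> X h" "e \<noteq> d" using ex_other_in_part[OF h(1)] by blast
  have "G \<inter> X h = {d}" using Hfam_Int_part_eq[OF GH h(1) dEG(2) h(2)] .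
  then have "{e} \<inter> G = {}" using e by blast
  then have less: "card (((E - {d}) \<union> {e}) \<inter> G) < card (E \<inter> G)"
    using card_Int_less_if_point_removed[OF finite_Hfam_member[OF EH] dEG] by blast
  have "P ((E - {d}) \<union> {e})"
  proof (cases "h = i")
    case True
    then have "E \<inter> X i = {d}" using Hfam_Int_part_eq[OF EH h(1) dEG(1) h(2)] by simp
    then show ?thesis unfolding P_def using moves[OF EA] e True by blast
  next
    case False
    obtain w where w: "E \<inter> X i = {w}" using Hfam_Int_part_singleton[OF EH i Ei] by blast
    moreover have "w \<noteq> d" using w h False part_unique i by blast
    ultimately show ?thesis unfolding P_def
      using move_transfer[OF moves i EA w h(1) False dEG(1) h(2) e(1)] by blast
  qed
  then show False using minE less by fastforce
qed

lemma move_in_part: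
  assumes i: "i \<in> {1..k}" and K: "K \<in> A" "u \<notin> K" "u' \<notin> K"
    and E: "E \<in> A" "E \<inter> X i = {u}" and u': "u' \<in> X i"
  shows "(E - {u}) \<union> {u'} \<in> A"
proof -
  have u: "u \<in> X i" "u \<in> E" using E by blast+
  have "u' \<notin> E \<or> u' = u" using E(2) u' by blast
  then have "transpose u u' ` E = (E - {u}) \<union> {u'}" using u(2) by (auto simp: transpose_def)
  moreover have "transpose u u' ` K = K" using K(2,3) by simp
  ultimately show ?thesis using closedD[OF part_invol_transpose[OF i u(1) u'] K(1) _ E(1)] by simp
qed

lemma moves_if_part_missed:
  assumes i: "i \<in> {1..k}" and E1: "E1 \<in> A" "E1 \<inter> X i = {}"
    and E: "E \<in> A" "E \<inter> X i = {u}" and u': "u' \<in> X i"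
  shows "(E - {u}) \<union> {u'} \<in> A"
proof (rule move_in_part[OF i E1(1) _ _ E u'])
  show "u \<notin> E1" "u' \<notin> E1" using E1(2) E(2) u' by blast+
qed

lemma moves_if_n_ge_3:
  assumes n3: "n \<ge> 3" and i: "i \<in> {1..k}"
    and F1: "F1 \<in> A" "F1 \<inter> X i = {x}" and F2: "F2 \<in> A" "F2 \<inter> X i = {y}" and "x \<noteq> y"
    and E: "E \<in> A" "E \<inter> X i = {u}" and u': "u' \<in> X i"
  shows "(E - {u}) \<union> {u'} \<in> A"
proof -
  have x: "x \<in> X i" and y: "y \<in> X i" using F1 F2 by blast+
  have "\<not> X i \<subseteq> {x, y}"
  proof
    assume "X i \<subseteq> {x, y}"
    then have "card (X i) \<le> card {x, y}" by (intro card_mono) auto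
    moreover have "card {x, y} \<le> 2" by (simp add: card_insert_if)
    ultimately show False using card_part[OF i] n3 by linarith
  qed
  then obtain w where w: "w \<in> X i" "w \<noteq> x" "w \<noteq> y" by blast
  have "y \<notin> F1" "w \<notin> F1" using notin_if_Int_eq_singleton[OF F1(2)] y w \<open>x \<noteq> y\<close> by auto
  then have F3: "(F2 - {y}) \<union> {w} \<in> A" using move_in_part[OF i F1(1) _ _ F2 w(1)] by blast
  have F3i: "((F2 - {y}) \<union> {w}) \<inter> X i = {w}" using F2(2) w(1) by blast
  obtain K v where K: "K \<in> A" "K \<inter> X i = {v}" "v \<noteq> u" "v \<noteq> u'"
  proof (cases "x \<noteq> u \<and> x \<noteq> u'")
    case True then show ?thesis using that F1 by blast
  next
    case False
    show ?thesis
    proof (cases "y \<noteq> u \<and> y \<noteq> u'")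
      case True then show ?thesis using that F2 by blast
    next
      case False': False
      then have "w \<noteq> u \<and> w \<noteq> u'" using False w \<open>x \<noteq> y\<close> by blast
      then show ?thesis using that F3 F3i by blast
    qed
  qed
  have "u \<in> X i" using E(2) by blast
  then have "u \<notin> K" "u' \<notin> K" using notin_if_Int_eq_singleton[OF K(2)] K(3,4) u' by auto
  then show ?thesis using move_in_part[OF i K(1) _ _ E u'] by blast
qed

lemma support_eq:
  assumes "E1 \<in> A" "E2 \<in> A" shows "support E1 = support E2"
proof -
  have "E' \<inter> X i = {}" if "E \<in> A" "E' \<in> A" "i \<in> {1..k}" "E \<inter> X i = {}" for E E' i
    using part_missed_if_moves[OF moves_if_part_missed[OF that(3,1,4)] that(3,2)] .
  then show ?thesis using assms unfolding support_def by blast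
qed

lemma member_unique_if_n_ge_3:
  assumes n3: "n \<ge> 3" and F1: "F1 \<in> A" and F2: "F2 \<in> A" shows "F1 = F2"
proof (rule ccontr)
  assume "F1 \<noteq> F2"
  then have "\<not> F1 \<subseteq> F2" using Hfam_eq_if_subset member_Hfam F1 F2 by blast
  then obtain x where x: "x \<in> F1" "x \<notin> F2" by blast
  obtain i where i: "i \<in> {1..k}" "x \<in> X i" using ex_part Hfam_subset member_Hfam[OF F1] x(1) by blast
  have Fx: "F1 \<inter> X i = {x}" using Hfam_Int_part_eq[OF member_Hfam[OF F1] i(1) x(1) i(2)] .
  have "i \<in> support F2" using support_eq[OF F1 F2] Fx i(1) unfolding support_def by blast
  then obtain y where y: "F2 \<inter> X i = {y}"
    using Hfam_Int_part_singleton[OF member_Hfam[OF F2] i(1)] unfolding support_def by blast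
  have "x \<noteq> y" using y x(2) by blast
  have "F1 \<inter> X i = {}"
    using part_missed_if_moves[OF moves_if_n_ge_3[OF n3 i(1) F1 Fx F2 y \<open>x \<noteq> y\<close>] i(1) F1] .
  then show False using Fx by simp
qed


lemma Int_part_singleton:
  assumes "E \<in> A" "F \<in> A" "h \<in> support F" shows "\<exists>e. E \<inter> X h = {e}"
  using support_eq[OF assms(1,2)] assms(3) Hfam_Int_part_singleton[OF member_Hfam[OF assms(1)]]
  unfolding support_def by blast

lemma in_support:
  assumes "E \<in> A" "F \<in> A" "h \<in> {1..k}" "x \<in> E" "x \<in> X h" shows "h \<in> support F"
  using support_eq[OF assms(1,2)] assms(3-5) unfolding support_def by blast

lemma eq_if_agree_on_support:
  assumes E: "E \<in> A" and F: "F \<in> A" and agree: "\<And>h. h \<in> support F \<Longrightarrow> E \<inter> X h = F \<inter> X h"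
  shows "E = F"
proof (rule eq_if_Int_parts_eq)
  show "E \<subseteq> {1..k*n}" "F \<subseteq> {1..k*n}" using Hfam_subset member_Hfam E F by blast+
  fix i assume i: "i \<in> {1..k}"
  show "E \<inter> X i = F \<inter> X i"
  proof (cases "i \<in> support F")
    case False
    then have "F \<inter> X i = {}" "E \<inter> X i = {}" using i support_eq[OF E F] unfolding support_def by auto
    then show ?thesis by simp
  qed (rule agree)
qed

definition double_flippable :: "nat set \<Rightarrow> nat \<Rightarrow> nat \<Rightarrow> bool" where
  "double_flippable E h j \<longleftrightarrow> (\<exists>a\<in>X h - E. \<exists>b\<in>X j - E. (E - (X h \<union> X j)) \<union> {a, b} \<in> A)"

text \<open>An involution exchanging parts h and j and swapping the two points of K there fixes K;
  since E agrees with K in exactly one of the two parts, it moves both points of E.\<close>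

lemma double_flip:
  assumes E: "E \<in> A" and K: "K \<in> A" and h: "h \<in> support K" and j: "j \<in> support K"
    and "h \<noteq> j" and differ: "(E \<inter> X h = K \<inter> X h) \<noteq> (E \<inter> X j = K \<inter> X j)"
  shows "double_flippable E h j"
proof -
  have hk: "h \<in> {1..k}" and jk: "j \<in> {1..k}" using h j support_subset by blast+
  obtain eh ej kh kj where Eh: "E \<inter> X h = {eh}" and Ej: "E \<inter> X j = {ej}"
    and Kh: "K \<inter> X h = {kh}" and Kj: "K \<inter> X j = {kj}"
    using Int_part_singleton E K h j by metis
  have pts: "eh \<in> X h" "ej \<in> X j" "kh \<in> X h" "kj \<in> X j" using Eh Ej Kh Kj by blast+
  have differ': "(eh = kh) \<noteq> (ej = kj)" using differ Eh Ej Kh Kj by simp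
  obtain \<sigma> where \<sigma>: "part_invol \<sigma>" "\<sigma> kh = kj" "\<sigma> ` X h = X j" "\<sigma> ` X j = X h"
      "\<forall>z. z \<notin> X h \<union> X j \<longrightarrow> \<sigma> z = z"
    using ex_part_invol_exchanging[OF hk jk \<open>h \<noteq> j\<close> pts(3,4)] by blast
  have invol: "\<And>z. \<sigma> (\<sigma> z) = z" using part_invol_apply[OF \<sigma>(1)] .
  have fix_rest: "\<sigma> ` (Z - (X h \<union> X j)) = Z - (X h \<union> X j)" for Z using \<sigma>(5) by force
  have KR: "K = insert kh (insert kj (K - (X h \<union> X j)))" using Kh Kj by blast
  have "\<sigma> ` K = K" by (subst (1 2) KR) (simp add: \<sigma>(2) invol[of kh, unfolded \<sigma>(2)] fix_rest insert_commute)
  then have \<sigma>E_A: "\<sigma> ` E \<in> A" using closedD[OF \<sigma>(1) K _ E] by simp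
  have ER: "E = insert eh (insert ej (E - (X h \<union> X j)))" using Eh Ej by blast
  have \<sigma>E: "\<sigma> ` E = (E - (X h \<union> X j)) \<union> {\<sigma> ej, \<sigma> eh}"
    by (subst ER) (simp add: fix_rest insert_commute)
  have new: "\<sigma> ej \<in> X h" "\<sigma> eh \<in> X j" using \<sigma>(3,4) pts(1,2) by blast+
  have "\<sigma> ej \<noteq> eh" "\<sigma> eh \<noteq> ej"
    using differ' \<sigma>(2) invol[of kh] invol[of eh] invol[of ej] by metis+
  then have "\<sigma> ej \<notin> E" "\<sigma> eh \<notin> E"
    using notin_if_Int_eq_singleton[OF Eh] notin_if_Int_eq_singleton[OF Ej] new by auto
  then show ?thesis using \<sigma>E_A new unfolding \<sigma>E double_flippable_def by blast
qed

lemma ex_member_separating: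
  assumes n2: "n = 2" and F1: "F1 \<in> A" and E0: "E0 \<in> A"
    and a0: "a0 \<in> support F1" "E0 \<inter> X a0 \<noteq> F1 \<inter> X a0"
    and b0: "b0 \<in> support F1" "E0 \<inter> X b0 = F1 \<inter> X b0"
    and h: "h \<in> support F1" and j: "j \<in> support F1" and "h \<noteq> j"
  shows "\<exists>K\<in>A. (K \<inter> X h = F1 \<inter> X h) \<noteq> (K \<inter> X j = F1 \<inter> X j)"
proof (cases "(E0 \<inter> X h = F1 \<inter> X h) \<noteq> (E0 \<inter> X j = F1 \<inter> X j)")
  case True
  then show ?thesis using E0 by (rule bexI)
next
  case False
  have S: "\<And>g. g \<in> support F1 \<Longrightarrow> g \<in> {1..k}" using support_subset by blast
  show ?thesis
  proof (cases "E0 \<inter> X h = F1 \<inter> X h")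
    case True
    then have agree_j: "E0 \<inter> X j = F1 \<inter> X j" using False by simp
    have "a0 \<noteq> h" "a0 \<noteq> j" using a0(2) True agree_j by auto
    have "(E0 \<inter> X a0 = F1 \<inter> X a0) \<noteq> (E0 \<inter> X h = F1 \<inter> X h)" using a0(2) True by simp
    then obtain a b where ab: "a \<in> X a0" "b \<in> X h" "b \<notin> E0" "(E0 - (X a0 \<union> X h)) \<union> {a, b} \<in> A"
      using double_flip[OF E0 F1 a0(1) h \<open>a0 \<noteq> h\<close>] unfolding double_flippable_def by blast
    define K where "K = (E0 - (X a0 \<union> X h)) \<union> {a, b}"
    have Kh: "K \<inter> X h = {b}" and Kj: "K \<inter> X j = E0 \<inter> X j"
      unfolding K_def using Int_part_replace_two[OF S[OF a0(1)] S[OF h] \<open>a0 \<noteq> h\<close> ab(1,2)]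
        S[OF j] \<open>a0 \<noteq> j\<close> \<open>h \<noteq> j\<close> by auto
    have "K \<inter> X h \<noteq> F1 \<inter> X h" using Kh True ab(3) by auto
    then have "(K \<inter> X h = F1 \<inter> X h) \<noteq> (K \<inter> X j = F1 \<inter> X j)" using Kj agree_j by simp
    moreover have "K \<in> A" using ab(4) unfolding K_def .
    ultimately show ?thesis by (rule bexI)
  next
    case disagree_h: False
    then have disagree_j: "E0 \<inter> X j \<noteq> F1 \<inter> X j" using False by simp
    have "b0 \<noteq> h" "b0 \<noteq> j" using b0(2) disagree_h disagree_j by auto
    have "(E0 \<inter> X j = F1 \<inter> X j) \<noteq> (E0 \<inter> X b0 = F1 \<inter> X b0)" using b0(2) disagree_j by simp
    then obtain a b where ab: "a \<in> X j" "a \<notin> E0" "b \<in> X b0" "(E0 - (X j \<union> X b0)) \<union> {a, b} \<in> A"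
      using double_flip[OF E0 F1 j b0(1) \<open>b0 \<noteq> j\<close>[symmetric]] unfolding double_flippable_def
      by blast
    define K where "K = (E0 - (X j \<union> X b0)) \<union> {a, b}"
    have Kj: "K \<inter> X j = {a}" and Kh: "K \<inter> X h = E0 \<inter> X h"
      unfolding K_def using Int_part_replace_two[OF S[OF j] S[OF b0(1)] \<open>b0 \<noteq> j\<close>[symmetric] ab(1,3)]
        S[OF h] \<open>b0 \<noteq> h\<close> \<open>h \<noteq> j\<close> by auto
    obtain e f where e: "E0 \<inter> X j = {e}" and f: "F1 \<inter> X j = {f}"
      using Int_part_singleton[OF E0 F1 j] Int_part_singleton[OF F1 F1 j] by blast
    have "a \<noteq> e" "f \<noteq> e" using ab(2) e disagree_j f by auto
    then have "a = f" using part_of_two_eq[OF n2 S[OF j], of a f e] ab(1) e f by blast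
    then have "(K \<inter> X h = F1 \<inter> X h) \<noteq> (K \<inter> X j = F1 \<inter> X j)" using Kj Kh f disagree_h by simp
    moreover have "K \<in> A" using ab(4) unfolding K_def .
    ultimately show ?thesis by (rule bexI)
  qed
qed

lemma double_flip_any:
  assumes n2: "n = 2" and F1: "F1 \<in> A"
    and separating: "\<And>h j. h \<in> support F1 \<Longrightarrow> j \<in> support F1 \<Longrightarrow> h \<noteq> j
                       \<Longrightarrow> \<exists>K\<in>A. (K \<inter> X h = F1 \<inter> X h) \<noteq> (K \<inter> X j = F1 \<inter> X j)"
    and E: "E \<in> A" and h: "h \<in> support F1" and j: "j \<in> support F1" and "h \<noteq> j"
  shows "double_flippable E h j"
proof (cases "(E \<inter> X h = F1 \<inter> X h) \<noteq> (E \<inter> X j = F1 \<inter> X j)")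
  case True
  then show ?thesis by (rule double_flip[OF E F1 h j \<open>h \<noteq> j\<close>])
next
  case False
  obtain K where K: "K \<in> A" "(K \<inter> X h = F1 \<inter> X h) \<noteq> (K \<inter> X j = F1 \<inter> X j)"
    using separating[OF h j \<open>h \<noteq> j\<close>] by blast
  have hK: "h \<in> support K" and jK: "j \<in> support K" using support_eq[OF F1 K(1)] h j by auto
  have hk: "h \<in> {1..k}" and jk: "j \<in> {1..k}" using h j support_subset by blast+
  obtain eh ej kh kj fh fj where Eh: "E \<inter> X h = {eh}" and Ej: "E \<inter> X j = {ej}"
    and Kh: "K \<inter> X h = {kh}" and Kj: "K \<inter> X j = {kj}"
    and Fh: "F1 \<inter> X h = {fh}" and Fj: "F1 \<inter> X j = {fj}"
    using Int_part_singleton E K F1 h j by metis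
  have pts: "eh \<in> X h" "kh \<in> X h" "fh \<in> X h" "ej \<in> X j" "kj \<in> X j" "fj \<in> X j"
    using Eh Kh Fh Ej Kj Fj by blast+
  have Kc: "(kh = fh) \<noteq> (kj = fj)" using K(2) Kh Kj Fh Fj by simp
  have Ec: "(eh = fh) = (ej = fj)" using False Eh Ej Fh Fj by simp
  have "(eh = kh) \<noteq> (ej = kj)"
  proof (cases "eh = fh")
    case True
    then show ?thesis using Ec Kc by auto
  next
    case False
    then have "(eh = kh) = (kh \<noteq> fh)" "(ej = kj) = (kj \<noteq> fj)"
      using part_of_two_eq[OF n2 hk, of eh kh fh] part_of_two_eq[OF n2 jk, of ej kj fj] pts Ec by auto
    then show ?thesis using Kc by simp
  qed
  then have "(E \<inter> X h = K \<inter> X h) \<noteq> (E \<inter> X j = K \<inter> X j)" using Eh Ej Kh Kj by simp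
  then show ?thesis by (rule double_flip[OF E K(1) hK jK \<open>h \<noteq> j\<close>])
qed

text \<open>Take E \<in> A with |E \<inter> G| minimal for some G \<in> B, and d \<in> E \<inter> G in part h. A double
  flip in parts h and j would decrease |E \<inter> G| unless G meets part j outside E; so G meets
  every part of the support, and meets E only in d.\<close>

lemma t_eq_1_and_le_if_double_flips:
  assumes F1: "F1 \<in> A"
    and flips: "\<And>E h j. E \<in> A \<Longrightarrow> h \<in> support F1 \<Longrightarrow> j \<in> support F1 \<Longrightarrow> h \<noteq> j \<Longrightarrow>
      double_flippable E h j"
  shows "t = 1" and "p \<le> q"
proof -
  obtain G where G: "G \<in> B" using B_nonempty by blast
  have GH: "G \<in> H q" using G B_Hfam by blast
  obtain E where EA: "E \<in> A" and minE: "\<And>E'. E' \<in> A \<Longrightarrow> card (E \<inter> G) \<le> card (E' \<inter> G)"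
    using ex_has_least_nat[of "\<lambda>E. E \<in> A" F1 "\<lambda>E. card (E \<inter> G)"] F1 by blast
  have EH: "E \<in> H p" using member_Hfam[OF EA] .
  have "1 \<le> card (E \<inter> G)" using cross_le[OF EA G] t_pos by simp
  then obtain d where d: "d \<in> E" "d \<in> G" by (metis Int_iff card.empty ex_in_conv not_one_le_zero)
  obtain h where h: "h \<in> {1..k}" "d \<in> X h" using ex_part Hfam_subset[OF EH] d(1) by blast
  have hS: "h \<in> support F1" using in_support[OF EA F1 h(1) d(1) h(2)] .
  have Gh: "G \<inter> X h = {d}" using Hfam_Int_part_eq[OF GH h(1) d(2) h(2)] .
  have meets: "\<exists>b\<in>X j - E. b \<in> G" if j: "j \<in> support F1" "j \<noteq> h" for j
  proof (rule ccontr)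
    assume "\<not> ?thesis"
    then have bG: "b \<notin> G" if "b \<in> X j" "b \<notin> E" for b using that by blast
    obtain a b where ab: "a \<in> X h" "a \<notin> E" "b \<in> X j" "b \<notin> E" "(E - (X h \<union> X j)) \<union> {a, b} \<in> A"
      using flips[OF EA hS j(1)] j(2) unfolding double_flippable_def by blast
    have "a \<noteq> d" using ab(2) d(1) by blast
    then have "a \<notin> G" using notin_if_Int_eq_singleton[OF Gh ab(1)] by blast
    then have "{a, b} \<inter> G = {}" using bG[OF ab(3,4)] by blast
    moreover have "E - (X h \<union> X j) \<subseteq> E - {d}" using h(2) by blast
    ultimately have "card (((E - (X h \<union> X j)) \<union> {a, b}) \<inter> G) < card (E \<inter> G)"
      by (rule card_Int_less_if_point_removed[OF finite_Hfam_member[OF EH] d, rotated])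
    then show False using minE[OF ab(5)] by simp
  qed
  have "card (E \<inter> G) \<le> 1"
  proof (rule ccontr)
    assume "\<not> card (E \<inter> G) \<le> 1"
    then have "E \<inter> G \<noteq> {d}" by auto
    then obtain d' where d': "d' \<in> E" "d' \<in> G" "d' \<noteq> d" using d by blast
    obtain j where j: "j \<in> {1..k}" "d' \<in> X j" using ex_part Hfam_subset[OF EH] d'(1) by blast
    have "j \<noteq> h" using notin_if_Int_eq_singleton[OF Gh _ d'(3)] d'(2) j(2) by blast
    then obtain b where b: "b \<in> X j" "b \<notin> E" "b \<in> G"
      using meets[OF in_support[OF EA F1 j(1) d'(1) j(2)]] by blast
    have "G \<inter> X j = {d'}" using Hfam_Int_part_eq[OF GH j(1) d'(2) j(2)] .
    then have "b = d'" using b(1,3) by blast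
    then show False using b(2) d'(1) by simp
  qed
  then show "t = 1" using cross_le[OF EA G] t_pos by simp
  have "support F1 \<subseteq> support G"
    using meets Gh h(1) support_subset unfolding support_def by blast
  then have "card (support F1) \<le> card (support G)"
    by (intro card_mono) (auto intro: finite_subset[OF support_subset])
  then show "p \<le> q" using card_support member_Hfam[OF F1] GH by simp
qed


lemma B_subset_partners:
  assumes "F \<in> A" shows "B \<subseteq> partners t q F"
proof
  fix G assume "G \<in> B"
  then show "G \<in> partners t q F"
    using B_Hfam cross_le[OF assms \<open>G \<in> B\<close>] unfolding partners_def by (auto simp: Int_commute)
qed

definition mixed :: "nat set \<Rightarrow> bool" where
  "mixed F \<longleftrightarrow> (\<exists>E\<in>A. \<exists>a\<in>support F. \<exists>b\<in>support F. E \<inter> X a \<noteq> F \<inter> X a \<and> E \<inter> X b = F \<inter> X b)"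

lemma member_subset_Union_support:
  assumes E: "E \<in> A" and F: "F \<in> A" shows "E \<subseteq> \<Union>(X ` support F)"
proof
  fix x assume "x \<in> E"
  then obtain h where "h \<in> {1..k}" "x \<in> X h"
    using ex_part subsetD[OF Hfam_subset[OF member_Hfam[OF E]]] by blast
  then show "x \<in> \<Union>(X ` support F)" using in_support[OF E F _ \<open>x \<in> E\<close>] by blast
qed

text \<open>Extend F1 to W \<in> H q. Complementing a member E \<noteq> F1 within the parts of the support
  and adding W - F1 gives a set of H q that meets F1 but misses E: a partner of F1 outside B.\<close>

lemma card_le_partners_if_t_eq_1:
  assumes n2: "n = 2" and "t = 1" "p \<le> q" "q \<le> k" and F1: "F1 \<in> A"
  shows "card A + card B \<le> 1 + card (partners t q F1)"
proof -
  obtain W where W: "W \<in> H q" "F1 \<subseteq> W" using Hfam_extend[OF member_Hfam[OF F1] \<open>p \<le> q\<close> \<open>q \<le> k\<close>] by blast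
  define U where "U = \<Union>(X ` support F1)"
  define \<phi> where "\<phi> E = (U - E) \<union> (W - F1)" for E
  have EU: "E \<subseteq> U" if "E \<in> A" for E
    unfolding U_def using member_subset_Union_support[OF that F1] .
  have RU: "(W - F1) \<inter> U = {}" unfolding U_def using Diff_Int_Union_support[OF W] .
  have \<phi>H: "\<phi> E \<in> H q" if "E \<in> A" for E
    unfolding \<phi>_def U_def
    by (rule complement_in_Hfam[OF n2 W member_Hfam[OF that] support_eq[OF that F1]])
  have "\<phi> E \<notin> B" if "E \<in> A" for E
  proof
    assume "\<phi> E \<in> B"
    moreover have "E \<inter> \<phi> E = {}" unfolding \<phi>_def using RU EU[OF that] by blast
    ultimately show False using cross_le[OF that \<open>\<phi> E \<in> B\<close>] t_pos by simp
  qed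
  moreover have "\<phi> E \<in> partners t q F1" if "E \<in> A" "E \<noteq> F1" for E
  proof -
    have "\<not> F1 \<subseteq> E" using Hfam_eq_if_subset[OF member_Hfam[OF F1] member_Hfam[OF that(1)]] that(2) by blast
    then obtain x where "x \<in> F1" "x \<notin> E" by blast
    then have "x \<in> \<phi> E \<inter> F1" unfolding \<phi>_def using EU[OF F1] by blast
    then have "card (\<phi> E \<inter> F1) \<noteq> 0" using finite_Hfam_member[OF \<phi>H[OF that(1)]] by auto
    then show ?thesis unfolding partners_def using \<phi>H[OF that(1)] \<open>t = 1\<close> by simp
  qed
  ultimately have img: "\<phi> ` (A - {F1}) \<subseteq> partners t q F1 - B" by blast
  have "inj_on \<phi> (A - {F1})"
  proof (rule inj_onI)
    fix E E' assume "E \<in> A - {F1}" "E' \<in> A - {F1}" "\<phi> E = \<phi> E'"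
    moreover have "\<phi> D \<inter> U = U - D" for D unfolding \<phi>_def using RU by blast
    ultimately have "U - E = U - E'" by metis
    then show "E = E'" using EU \<open>E \<in> A - {F1}\<close> \<open>E' \<in> A - {F1}\<close> by blast
  qed
  from card_add_le_if_inj_into_complement[OF finite_partners B_subset_partners[OF F1]
        finite_subset[OF A_Hfam finite_Hfam] F1 this img]
  show ?thesis .
qed

lemma card_le_partners_if_mixed:
  assumes n2: "n = 2" and "q \<le> k" and F1: "F1 \<in> A" and "mixed F1"
  shows "card A + card B \<le> 1 + card (partners t q F1)"
proof -
  obtain E0 a0 b0 where E0: "E0 \<in> A" and a0: "a0 \<in> support F1" "E0 \<inter> X a0 \<noteq> F1 \<inter> X a0"
    and b0: "b0 \<in> support F1" "E0 \<inter> X b0 = F1 \<inter> X b0"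
    using \<open>mixed F1\<close> unfolding mixed_def by blast
  have flips: "double_flippable E h j"
    if "E \<in> A" "h \<in> support F1" "j \<in> support F1" "h \<noteq> j" for E h j
    by (rule double_flip_any[OF n2 F1 _ that]) (rule ex_member_separating[OF n2 F1 E0 a0 b0]; assumption)
  have "t = 1" by (rule t_eq_1_and_le_if_double_flips(1)[OF F1]) (rule flips; assumption)
  moreover have "p \<le> q" by (rule t_eq_1_and_le_if_double_flips(2)[OF F1]) (rule flips; assumption)
  ultimately show ?thesis using card_le_partners_if_t_eq_1[OF n2 _ _ \<open>q \<le> k\<close> F1] by blast
qed

lemma antipodal_if_not_mixed:
  assumes n2: "n = 2" and F1: "F1 \<in> A" and F2: "F2 \<in> A" "F2 \<noteq> F1" and "\<not> mixed F1"
  shows "A \<subseteq> {F1, F2}" and "F1 \<inter> F2 = {}"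
proof -
  have unmixed: "E \<inter> X b \<noteq> F1 \<inter> X b"
    if "E \<in> A" "a \<in> support F1" "b \<in> support F1" "E \<inter> X a \<noteq> F1 \<inter> X a" for E a b
    using \<open>\<not> mixed F1\<close> that unfolding mixed_def by blast
  obtain a where "a \<in> support F1" "F2 \<inter> X a \<noteq> F1 \<inter> X a"
    using eq_if_agree_on_support[OF F2(1) F1] F2(2) by blast
  then have F2_differs: "F2 \<inter> X h \<noteq> F1 \<inter> X h" if "h \<in> support F1" for h
    using unmixed[OF F2(1)] that by blast
  have "E = F2" if E: "E \<in> A" "E \<noteq> F1" for E
  proof (rule eq_if_agree_on_support[OF E(1) F2(1)])
    fix h assume "h \<in> support F2"
    then have h: "h \<in> support F1" "h \<in> {1..k}"
      using support_eq[OF F1 F2(1)] support_subset by (simp, blast)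
    obtain a where "a \<in> support F1" "E \<inter> X a \<noteq> F1 \<inter> X a"
      using eq_if_agree_on_support[OF E(1) F1] E(2) by blast
    then have "E \<inter> X h \<noteq> F1 \<inter> X h" using unmixed[OF E(1)] h(1) by blast
    moreover obtain e f1 f2 where "E \<inter> X h = {e}" "F1 \<inter> X h = {f1}" "F2 \<inter> X h = {f2}"
      using Int_part_singleton[OF E(1) F1 h(1)] Int_part_singleton[OF F1 F1 h(1)]
        Int_part_singleton[OF F2(1) F1 h(1)] by blast
    ultimately show "E \<inter> X h = F2 \<inter> X h"
      using F2_differs[OF h(1)] part_of_two_eq[OF n2 h(2), of e f2 f1] by auto
  qed
  then show "A \<subseteq> {F1, F2}" by blast
  show "F1 \<inter> F2 = {}"
  proof (rule ccontr)
    assume "F1 \<inter> F2 \<noteq> {}"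
    then obtain x h where x: "x \<in> F1" "x \<in> F2" "h \<in> {1..k}" "x \<in> X h"
      using ex_part Hfam_subset member_Hfam[OF F1] by blast
    then have "F1 \<inter> X h = F2 \<inter> X h"
      using Hfam_Int_part_eq member_Hfam F1 F2(1) by metis
    then show False using F2_differs in_support[OF F1 F1 x(3,1,4)] by blast
  qed
qed

lemma ex_partner_avoiding:
  assumes F1: "F1 \<in> A" and F2: "F2 \<in> A" and disj: "F1 \<inter> F2 = {}"
    and "t \<le> p" "t \<le> q" "q \<le> k"
  shows "\<exists>W\<in>partners t q F1. W \<inter> F2 = {}"
proof (cases "q \<le> p")
  case True
  then obtain W where W: "W \<in> H q" "W \<subseteq> F1" using Hfam_restrict member_Hfam[OF F1] by blast
  then have "W \<inter> F1 = W" "W \<inter> F2 = {}" using disj by blast+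
  then show ?thesis
    using W(1) card_Hfam_member[OF W(1)] \<open>t \<le> q\<close> unfolding partners_def by auto
next
  case False
  then obtain W where W: "W \<in> H q" "F1 \<subseteq> W"
    using Hfam_extend[OF member_Hfam[OF F1] _ \<open>q \<le> k\<close>] by fastforce
  have "W \<inter> F2 = {}"
  proof (rule ccontr)
    assume "W \<inter> F2 \<noteq> {}"
    then obtain x h where x: "x \<in> W" "x \<in> F2" "h \<in> {1..k}" "x \<in> X h"
      using ex_part Hfam_subset member_Hfam[OF F2] by blast
    obtain f where f: "F1 \<inter> X h = {f}" using Int_part_singleton[OF F1 F1 in_support[OF F2 F1 x(3,2,4)]] by blast
    have "W \<inter> X h = {x}" using Hfam_Int_part_eq[OF W(1) x(3,1,4)] .
    then have "f = x" using f W(2) by blast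
    then show False using f x(2) disj by blast
  qed
  moreover have "W \<inter> F1 = F1" using W(2) by blast
  then have "t \<le> card (W \<inter> F1)" using card_Hfam_member[OF member_Hfam[OF F1]] \<open>t \<le> p\<close> by simp
  ultimately show ?thesis using W(1) unfolding partners_def by blast
qed

lemma card_le_partners_if_not_mixed:
  assumes n2: "n = 2" and F1: "F1 \<in> A" and F2: "F2 \<in> A" "F2 \<noteq> F1" and "\<not> mixed F1"
    and "t \<le> p" "t \<le> q" "q \<le> k"
  shows "card A + card B \<le> 1 + card (partners t q F1)"
proof -
  note antipodal = antipodal_if_not_mixed[OF n2 F1 F2 \<open>\<not> mixed F1\<close>]
  obtain W where W: "W \<in> partners t q F1" "W \<inter> F2 = {}"
    using ex_partner_avoiding[OF F1 F2(1) antipodal(2)] assms(6-8) by blast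
  have "W \<notin> B"
  proof
    assume "W \<in> B"
    moreover have "F2 \<inter> W = {}" using W(2) by (simp add: Int_commute)
    ultimately show False using cross_le[OF F2(1) \<open>W \<in> B\<close>] t_pos by simp
  qed
  then have img: "(\<lambda>_. W) ` (A - {F1}) \<subseteq> partners t q F1 - B" using W(1) by blast
  have "A - {F1} \<subseteq> {F2}" using antipodal(1) by blast
  then have "inj_on (\<lambda>_. W) (A - {F1})" by (rule inj_on_subset[of _ "{F2}", rotated]) simp
  from card_add_le_if_inj_into_complement[OF finite_partners B_subset_partners[OF F1]
        finite_subset[OF A_Hfam finite_Hfam] F1 this img]
  show ?thesis .
qed

lemma card_add_le_partners:
  assumes F1: "F1 \<in> A" and "t \<le> p" "t \<le> q" "q \<le> k"
  shows "card A + card B \<le> 1 + card (partners t q F1)"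
proof (cases "A = {F1}")
  case True
  then show ?thesis using card_mono[OF finite_partners B_subset_partners[OF F1]] by simp
next
  case False
  then obtain F2 where F2: "F2 \<in> A" "F2 \<noteq> F1" using F1 by blast
  then have n2: "n = 2" using member_unique_if_n_ge_3[OF _ F1] two_le_n by fastforce
  show ?thesis
  proof (cases "mixed F1")
    case True
    then show ?thesis using card_le_partners_if_mixed[OF n2 \<open>q \<le> k\<close> F1] by blast
  next
    case False
    then show ?thesis using card_le_partners_if_not_mixed[OF n2 F1 F2] assms(2-4) by blast
  qed
qed

end

context equipartition
begin

lemma card_add_le_partners_Vset:
  assumes adm: "admissible p q t A B" and "stabiliser_closed A"
    and "1 \<le> t" "t \<le> p" "t \<le> q" "p \<le> k" "q \<le> k"
  shows "card A + card B \<le> 1 + card (partners t q (Vset X p))"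
proof -
  interpret closed_pair X n k p q t A B
    using adm assms(2,3) unfolding admissible_def by unfold_locales auto
  obtain F1 where F1: "F1 \<in> A" using adm unfolding admissible_def by blast
  have "card A + card B \<le> 1 + card (partners t q F1)"
    using card_add_le_partners[OF F1] assms(4-7) by blast
  also have "card (partners t q F1) = card (partners t q (Vset X p))"
    using card_partners_eq_Vset member_Hfam[OF F1] \<open>p \<le> k\<close> by blast
  finally show ?thesis .
qed

lemma admissible_card_le:
  assumes adm: "admissible p q t A B" and "1 \<le> t" "t \<le> p" "t \<le> q" "p \<le> k" "q \<le> k"
  shows "card A + card B
           \<le> 1 + max (card (partners t q (Vset X p))) (card (partners t p (Vset X q)))"
proof -
  obtain A1 B1 where adm1: "admissible p q t A1 B1"
    and max1: "\<And>A' B'. admissible p q t A' B' \<Longrightarrow> card A' + card B' \<le> card A1 + card B1"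
    and closed: "stabiliser_closed A1 \<or> stabiliser_closed B1"
    by (rule ex_extremal_admissible[OF adm]) blast
  have "card A + card B \<le> card A1 + card B1" using max1[OF adm] .
  also have "\<dots> \<le> 1 + max (card (partners t q (Vset X p))) (card (partners t p (Vset X q)))"
    using closed
  proof (elim disjE)
    assume "stabiliser_closed A1"
    then have "card A1 + card B1 \<le> 1 + card (partners t q (Vset X p))"
      using card_add_le_partners_Vset[OF adm1] assms(2-6) by blast
    then show ?thesis by simp
  next
    assume "stabiliser_closed B1"
    then have "card B1 + card A1 \<le> 1 + card (partners t p (Vset X q))"
      using card_add_le_partners_Vset[OF admissible_swap[OF adm1]] assms(2-6) by blast
    then show ?thesis by simp
  qed
  finally show ?thesis .
qed

end

theorem theorem1p6:
  fixes n k l l' t :: nat and X :: "nat \<Rightarrow> nat set"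
    and \<F> \<G> :: "nat set set"
  assumes "n \<ge> 2" and "k \<ge> l" and "l \<ge> l'" and "l' \<ge> t" and "t \<ge> 1"
    and "(\<Union>i\<in>{1..k}. X i) = {1..k*n}"
    and "\<forall>i\<in>{1..k}. \<forall>j\<in>{1..k}. i \<noteq> j \<longrightarrow> X i \<inter> X j = {}"
    and "\<forall>i\<in>{1..k}. card (X i) = n"
    and "\<F> \<subseteq> Hfam X n k l" and "\<G> \<subseteq> Hfam X n k l'"
    and "\<F> \<noteq> {}" and "\<G> \<noteq> {}"
    and "cross_t_intersecting t \<F> \<G>"
  shows "card \<F> + card \<G> \<le>
    Max ({card {F \<in> Hfam X n k l. t \<le> card (F \<inter> Vset X l')} + card {Vset X l'}}
         \<union> {card {F \<in> Hfam X n k l. Vset X a \<subseteq> F}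
             + card {G \<in> Hfam X n k l'. t \<le> card (G \<inter> Vset X a)} | a. a \<in> {l'+1..l}})"
    (is "_ \<le> Max ({?g} \<union> {?f a |a. a \<in> {l'+1..l}})")
proof -
  interpret equipartition X n k using assms(1,6-8) by unfold_locales
  let ?S = "{?g} \<union> {?f a |a. a \<in> {l'+1..l}}"
  have "admissible l l' t \<F> \<G>" unfolding admissible_def using assms(9-13) by blast
  then have bound: "card \<F> + card \<G>
               \<le> 1 + max (card (partners t l' (Vset X l))) (card (partners t l (Vset X l')))"
    using admissible_card_le assms(2-5) by simp
  have fin: "finite ?S" by simp
  have "1 + card (partners t l (Vset X l')) \<in> ?S"
    unfolding partners_def by simp
  then have le0: "1 + card (partners t l (Vset X l')) \<le> Max ?S" by (rule Max_ge[OF fin])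
  have "1 + card (partners t l' (Vset X l)) \<in> ?S"
  proof (cases "l' = l")
    case False
    then have "l \<in> {l'+1..l}" using assms(3) by simp
    then have "?f l \<in> {?f a |a. a \<in> {l'+1..l}}" by blast
    then show ?thesis unfolding partners_def Hfam_supersets_Vset[OF assms(2)] by simp
  qed (simp add: partners_def)
  then have "1 + card (partners t l' (Vset X l)) \<le> Max ?S" by (rule Max_ge[OF fin])
  then show ?thesis using bound le0 by linarith
qed

end
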